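(* Let $H$ be a finite simple graph with vertex set $V$. Then $H$ can be obtained from the complete graph on $V$ through a (finite, possibly empty) sequence of erasures if and only if $H$ is a connected chordal graph.
   Context: All graphs are finite, undirected, simple. A graph is chordal if every induced cycle has length three. A facet edge of $G$ is an edge $xy$ such that $\{x,y\}$ is a maximal clique of $G$. An edge of $G$ is exposed if it is contained in a unique maximal clique of $G$ and it is not a facet edge. For graphs $G,H$ on the same vertex set $V$, $H$ is obtained from $G$ through an erasure if $G$ contains an exposed edge $e$ with $H=G-e$ (delete the edge, keep all vertices). *)

theory Defs
  imports Main
begin

definition simple_graph :: "'a set \<Rightarrow> 'a set set \<Rightarrow> bool" where
  "simple_graph V E \<longleftrightarrow> (\<forall>e\<in>E. \<exists>x y. x \<in> V \<and> y \<in> V \<and> x \<noteq> y \<and> e = {x, y})"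

definition complete_graph :: "'a set \<Rightarrow> 'a set set" where
  "complete_graph V = {{x, y} | x y. x \<in> V \<and> y \<in> V \<and> x \<noteq> y}"

definition adj :: "'a set set \<Rightarrow> 'a \<Rightarrow> 'a \<Rightarrow> bool" where
  "adj E x y \<longleftrightarrow> {x, y} \<in> E"

definition is_clique :: "'a set \<Rightarrow> 'a set set \<Rightarrow> 'a set \<Rightarrow> bool" where
  "is_clique V E C \<longleftrightarrow> C \<subseteq> V \<and> (\<forall>x\<in>C. \<forall>y\<in>C. x \<noteq> y \<longrightarrow> adj E x y)"

definition maximal_clique :: "'a set \<Rightarrow> 'a set set \<Rightarrow> 'a set \<Rightarrow> bool" where
  "maximal_clique V E C \<longleftrightarrow> is_clique V E C \<and> (\<forall>D. is_clique V E D \<and> C \<subseteq> D \<longrightarrow> D = C)"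

definition facet_edge :: "'a set \<Rightarrow> 'a set set \<Rightarrow> 'a set \<Rightarrow> bool" where
  "facet_edge V E e \<longleftrightarrow> e \<in> E \<and> maximal_clique V E e"

definition exposed_edge :: "'a set \<Rightarrow> 'a set set \<Rightarrow> 'a set \<Rightarrow> bool" where
  "exposed_edge V E e \<longleftrightarrow> e \<in> E \<and> (\<exists>!C. maximal_clique V E C \<and> e \<subseteq> C) \<and> \<not> facet_edge V E e"

definition erasure :: "'a set \<Rightarrow> 'a set set \<Rightarrow> 'a set set \<Rightarrow> bool" where
  "erasure V G H \<longleftrightarrow> (\<exists>e. exposed_edge V G e \<and> H = G - {e})"

definition induced_cycle :: "'a set \<Rightarrow> 'a set set \<Rightarrow> 'a list \<Rightarrow> bool" where
  "induced_cycle V E xs \<longleftrightarrow> length xs \<ge> 3 \<and> distinct xs \<and> set xs \<subseteq> V \<and>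
     (\<forall>i<length xs. \<forall>j<length xs. i \<noteq> j \<longrightarrow>
        (adj E (xs ! i) (xs ! j) \<longleftrightarrow>
          (j = (i + 1) mod length xs \<or> i = (j + 1) mod length xs)))"

definition chordal :: "'a set \<Rightarrow> 'a set set \<Rightarrow> bool" where
  "chordal V E \<longleftrightarrow> (\<forall>xs. induced_cycle V E xs \<longrightarrow> length xs = 3)"

definition connected_graph :: "'a set \<Rightarrow> 'a set set \<Rightarrow> bool" where
  "connected_graph V E \<longleftrightarrow>
     (\<forall>x\<in>V. \<forall>y\<in>V. (\<lambda>u v. u \<in> V \<and> v \<in> V \<and> adj E u v)\<^sup>*\<^sup>* x y)"

end

theory Submission
  imports Defs
begin

text \<open>
  Erasing an exposed edge xy keeps a graph connected, because the unique maximal clique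
  through xy has a third vertex adjacent to both ends. It also keeps it chordal: xy is
  exposed exactly when the common neighbourhood of x and y is a nonempty clique, and a new
  long induced cycle would pass through x and y with y in the interior of the path left
  after deleting x, so the two cycle-neighbours of y would be adjacent common neighbours.

  Conversely, let H be connected, chordal and not complete, and choose non-adjacent x, y
  with as many common neighbours as possible. These form a nonempty clique (a non-edge
  among them would close an induced 4-cycle), so xy is exposed in H + xy. Moreover H + xy
  is chordal: a long induced cycle through xy leaves an induced path x, q0, q1, ..., y in H,
  along which every common neighbour of x and y is adjacent to q1, and so is q0; then x and
  q1 would have more common neighbours than x and y. Induction on the number of missing
  edges concludes.
\<close>

lemma adj_commute: "adj E a b \<longleftrightarrow> adj E b a"
  by (simp add: adj_def insert_commute)

lemma simple_graph_iff_subset_complete_graph: "simple_graph V E \<longleftrightarrow> E \<subseteq> complete_graph V"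
  unfolding simple_graph_def complete_graph_def by blast

lemma adj_complete_graphD:
  "E \<subseteq> complete_graph V \<Longrightarrow> adj E a b \<Longrightarrow> a \<in> V \<and> b \<in> V \<and> a \<noteq> b"
  unfolding adj_def complete_graph_def by (auto simp: doubleton_eq_iff)

lemma finite_complete_graph: "finite V \<Longrightarrow> finite (complete_graph V)"
  by (rule finite_subset[of _ "Pow V"]) (auto simp: complete_graph_def)

lemma adj_insert_edge: "adj (insert {x, y} E) a b \<longleftrightarrow> adj E a b \<or> {a, b} = {x, y}"
  by (auto simp: adj_def)

lemma adj_Diff_edge: "adj (E - {{x, y}}) a b \<longleftrightarrow> adj E a b \<and> {a, b} \<noteq> {x, y}"
  by (auto simp: adj_def)

definition neighbours :: "'a set \<Rightarrow> 'a set set \<Rightarrow> 'a \<Rightarrow> 'a set" where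
  "neighbours V E a = {c \<in> V. adj E a c}"

lemma is_clique_adj: "is_clique V E C \<Longrightarrow> a \<in> C \<Longrightarrow> b \<in> C \<Longrightarrow> a \<noteq> b \<Longrightarrow> adj E a b"
  unfolding is_clique_def by blast

lemma is_clique_subset: "is_clique V E M \<Longrightarrow> C \<subseteq> M \<Longrightarrow> is_clique V E C"
  unfolding is_clique_def by blast

lemma is_clique_mono: "is_clique V E C \<Longrightarrow> E \<subseteq> F \<Longrightarrow> is_clique V F C"
  unfolding is_clique_def adj_def by blast

lemma ex_maximal_clique_superset:
  assumes "finite V" "is_clique V E K"
  obtains M where "maximal_clique V E M" "K \<subseteq> M"
proof -
  let ?P = "\<lambda>D. is_clique V E D \<and> K \<subseteq> D"
  have "?P K" using assms(2) by simp
  moreover have "\<forall>D. ?P D \<longrightarrow> card D < Suc (card V)"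
    using assms(1) by (simp add: is_clique_def card_mono less_Suc_eq_le)
  ultimately have "\<exists>M. ?P M \<and> (\<forall>D. ?P D \<longrightarrow> card D \<le> card M)"
    by (rule Lattices_Big.ex_has_greatest_nat)
  then obtain M where M: "?P M" "\<forall>D. ?P D \<longrightarrow> card D \<le> card M" by blast
  have "D = M" if "is_clique V E D" "M \<subseteq> D" for D
  proof -
    have "finite D" using assms(1) that(1) by (auto simp: is_clique_def intro: finite_subset)
    moreover have "card D \<le> card M" using M that by auto
    ultimately show "D = M" using card_seteq that(2) by blast
  qed
  with M show ?thesis by (intro that) (auto simp: maximal_clique_def)
qed

lemma connected_graph_mono: "connected_graph V H \<Longrightarrow> H \<subseteq> G \<Longrightarrow> connected_graph V G"
  unfolding connected_graph_def adj_def
  by (blast intro: rtranclp_mono[THEN predicate2D, rotated])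

lemma rtranclp_leaves_set:
  assumes "R\<^sup>*\<^sup>* a b" "a \<in> S" "b \<notin> S"
  obtains u v where "R u v" "u \<in> S" "v \<notin> S"
  using assms(1,3) that by (induction rule: rtranclp_induct) (use assms(2) in blast)+

section \<open>Induced paths and cycles\<close>

definition induced_path :: "'a set set \<Rightarrow> 'a list \<Rightarrow> bool" where
  "induced_path E ps \<longleftrightarrow> distinct ps \<and> (\<forall>i<length ps. \<forall>j<length ps. i \<noteq> j \<longrightarrow>
      (adj E (ps ! i) (ps ! j) \<longleftrightarrow> j = Suc i \<or> i = Suc j))"

lemma induced_path_adj_iff:
  "induced_path E ps \<Longrightarrow> i < length ps \<Longrightarrow> j < length ps \<Longrightarrow> i \<noteq> j \<Longrightarrow>
    adj E (ps ! i) (ps ! j) \<longleftrightarrow> j = Suc i \<or> i = Suc j"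
  by (simp add: induced_path_def)

lemma induced_path_inner_vertex:
  assumes "induced_path E ps" "0 < k" "Suc k < length ps"
  shows "adj E (ps ! k) (ps ! (k - 1))" "adj E (ps ! k) (ps ! Suc k)"
    and "ps ! (k - 1) \<noteq> ps ! Suc k" "\<not> adj E (ps ! (k - 1)) (ps ! Suc k)"
  using assms nth_eq_iff_index_eq[of ps "k - 1" "Suc k"]
  by (auto simp: induced_path_adj_iff induced_path_def)

lemma induced_path_take: "induced_path E ps \<Longrightarrow> induced_path E (take m ps)"
  unfolding induced_path_def by auto

lemma induced_path_drop: "induced_path E ps \<Longrightarrow> induced_path E (drop m ps)"
  unfolding induced_path_def by auto

lemma induced_path_rev: "induced_path E ps \<Longrightarrow> induced_path E (rev ps)"
  unfolding induced_path_def by (auto simp: rev_nth)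

lemma induced_path_Cons:
  assumes "induced_path E ps" "a \<notin> set ps" "\<And>i. i < length ps \<Longrightarrow> adj E a (ps ! i) \<longleftrightarrow> i = 0"
  shows "induced_path E (a # ps)"
  using assms unfolding induced_path_def
  by (simp only: length_Cons All_less_Suc2) (auto simp: adj_commute)

lemma induced_path_cong:
  assumes "induced_path E ps" "\<And>a b. a \<in> set ps \<Longrightarrow> b \<in> set ps \<Longrightarrow> adj E a b \<longleftrightarrow> adj F a b"
  shows "induced_path F ps"
  using assms unfolding induced_path_def by (metis nth_mem)

lemma Suc_mod_Suc: "i \<le> n \<Longrightarrow> Suc i mod Suc n = (if i = n then 0 else Suc i)"
  by (simp add: mod_Suc)

lemma induced_cycle_Cons_iff:
  "induced_cycle V E (x # ps) \<longleftrightarrow> length ps \<ge> 2 \<and> x \<in> V \<and> set ps \<subseteq> V \<and> x \<notin> set ps \<and>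
     induced_path E ps \<and> (\<forall>i<length ps. adj E x (ps ! i) \<longleftrightarrow> i = 0 \<or> i = length ps - 1)"
  unfolding induced_cycle_def induced_path_def
  by (simp only: length_Cons All_less_Suc2) (auto simp: Suc_mod_Suc adj_commute)

lemma add_mod_cancel_left: "(k + i) mod n = (k + j) mod (n::nat) \<longleftrightarrow> i mod n = j mod n"
  by (simp add: nat_mod_eq_iff)

lemma induced_cycle_rotate:
  assumes "induced_cycle V E xs"
  shows "induced_cycle V E (rotate k xs)"
proof -
  let ?n = "length xs" and ?r = "\<lambda>i. (k + i) mod length xs"
  have adj: "\<And>a b. a < ?n \<Longrightarrow> b < ?n \<Longrightarrow> a \<noteq> b \<Longrightarrow>
      adj E (xs ! a) (xs ! b) \<longleftrightarrow> b = (a + 1) mod ?n \<or> a = (b + 1) mod ?n"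
    using assms unfolding induced_cycle_def by auto
  have succ: "?r j = (?r i + 1) mod ?n \<longleftrightarrow> j = (i + 1) mod ?n" if "j < ?n" for i j
    using that add_mod_cancel_left[of k j ?n "i + 1"] by (simp add: mod_Suc_eq)
  have inj: "?r i = ?r j \<longleftrightarrow> i = j" if "i < ?n" "j < ?n" for i j
    using that add_mod_cancel_left[of k i ?n j] by simp
  show ?thesis
    unfolding induced_cycle_def
  proof (intro conjI allI impI)
    fix i j assume "i < length (rotate k xs)" "j < length (rotate k xs)" "i \<noteq> j"
    moreover have "?n > 0" using assms by (auto simp: induced_cycle_def)
    ultimately show "adj E (rotate k xs ! i) (rotate k xs ! j) \<longleftrightarrow>
        j = (i + 1) mod length (rotate k xs) \<or> i = (j + 1) mod length (rotate k xs)"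
      using adj[of "?r i" "?r j"] inj[of i j] succ[of j i] succ[of i j] by (simp add: nth_rotate)
  qed (use assms in \<open>auto simp: induced_cycle_def\<close>)
qed

lemma induced_cycle_rotate_to:
  assumes "induced_cycle V E xs" "x \<in> set xs"
  obtains ps where "induced_cycle V E (x # ps)" "set (x # ps) = set xs"
    "length (x # ps) = length xs"
proof -
  obtain k where k: "k < length xs" "xs ! k = x" using assms(2) by (auto simp: in_set_conv_nth)
  then have "rotate k xs ! 0 = x" "rotate k xs \<noteq> []" using nth_rotate[of 0 xs k] by fastforce+
  then have "rotate k xs = x # tl (rotate k xs)" by (metis hd_conv_nth list.collapse)
  then show ?thesis
    using that induced_cycle_rotate[OF assms(1)] by (metis length_rotate set_rotate)
qed

lemma induced_cycle_Cons_rev: "induced_cycle V E (x # ps) \<Longrightarrow> induced_cycle V E (x # rev ps)"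
  by (auto simp: induced_cycle_Cons_iff induced_path_rev rev_nth)

lemma induced_cycle_cong:
  assumes "induced_cycle V E xs" "\<And>a b. a \<in> set xs \<Longrightarrow> b \<in> set xs \<Longrightarrow> adj E a b \<longleftrightarrow> adj F a b"
  shows "induced_cycle V F xs"
  using assms unfolding induced_cycle_def by (metis nth_mem)

lemma induced_cycle_Cons_induced_path_Diff:
  assumes "induced_cycle V E (x # ps)"
  shows "induced_path (E - {{x, last ps}}) (x # ps)"
proof -
  let ?n = "length ps"
  have ps: "?n \<ge> 2" "x \<notin> set ps" "induced_path E ps"
    and x_adj: "\<And>i. i < ?n \<Longrightarrow> adj E x (ps ! i) \<longleftrightarrow> i = 0 \<or> i = ?n - 1"
    using assms by (auto simp: induced_cycle_Cons_iff)
  have "ps \<noteq> []" using ps(1) by auto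
  then have last: "last ps = ps ! (?n - 1)" by (simp add: last_conv_nth)
  have distinct: "ps ! i = last ps \<longleftrightarrow> i = ?n - 1" if "i < ?n" for i
    using ps(3) that nth_eq_iff_index_eq[of ps i "?n - 1"] last by (simp add: induced_path_def)
  show ?thesis
  proof (rule induced_path_Cons)
    show "induced_path (E - {{x, last ps}}) ps"
      using ps(3)
      by (rule induced_path_cong) (use ps(2) in \<open>auto simp: adj_Diff_edge doubleton_eq_iff\<close>)
    show "adj (E - {{x, last ps}}) x (ps ! i) \<longleftrightarrow> i = 0" if "i < ?n" for i
      using x_adj[OF that] distinct[OF that] ps(1) by (auto simp: adj_Diff_edge doubleton_eq_iff)
  qed (use ps in simp)
qed

section \<open>Chordal graphs\<close>

lemma chordal_adj_induced_path:
  assumes "chordal V E" "induced_path E ps" "set ps \<subseteq> V" "c \<in> V" "c \<notin> set ps" "ps \<noteq> []"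
    and "adj E c (hd ps)" "adj E c (last ps)"
  shows "\<forall>a\<in>set ps. adj E c a"
  using assms(2-)
proof (induction "length ps" arbitrary: ps rule: less_induct)
  case less
  let ?n = "length ps"
  \<comment> \<open>A neighbour of c inside ps splits ps into two shorter paths; without one,
    c and ps form an induced cycle, which chordality allows only for three vertices.\<close>
  show ?case
  proof (cases "\<exists>i. 0 < i \<and> i < ?n - 1 \<and> adj E c (ps ! i)")
    case True
    then obtain i where i: "0 < i" "i < ?n - 1" "adj E c (ps ! i)" by blast
    have "\<forall>a\<in>set (take (Suc i) ps). adj E c a"
      using less.prems i
      by (intro less.hyps) (auto simp: induced_path_take hd_conv_nth last_conv_nth dest: in_set_takeD)
    moreover have "\<forall>a\<in>set (drop i ps). adj E c a"
      using less.prems i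
      by (intro less.hyps) (auto simp: induced_path_drop hd_drop_conv_nth dest: in_set_dropD)
    moreover have "set ps \<subseteq> set (take (Suc i) ps) \<union> set (drop i ps)"
      by (metis append_take_drop_id set_append set_take_subset_set_take Un_mono le_SucI order_refl)
    ultimately show ?thesis by blast
  next
    case False
    have "?n \<le> 2"
    proof (rule ccontr)
      assume "\<not> ?n \<le> 2"
      moreover have "adj E c (ps ! i) \<longleftrightarrow> i = 0 \<or> i = ?n - 1" if "i < ?n" for i
        using False less.prems that
        by (cases "i = 0 \<or> i = ?n - 1") (auto simp: hd_conv_nth last_conv_nth dest!: spec[of _ i])
      ultimately have "induced_cycle V E (c # ps)"
        using less.prems by (simp add: induced_cycle_Cons_iff)
      then show False using assms(1) \<open>\<not> ?n \<le> 2\<close> by (auto simp: chordal_def)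
    qed
    then have "set ps = {hd ps, last ps}"
      using \<open>ps \<noteq> []\<close> by (cases ps; cases "tl ps") auto
    then show ?thesis using less.prems by simp
  qed
qed

lemma chordal_common_neighbours_clique:
  assumes "E \<subseteq> complete_graph V" "chordal V E" "x \<in> V" "y \<in> V" "x \<noteq> y" "\<not> adj E x y"
  shows "is_clique V E (neighbours V E x \<inter> neighbours V E y)"
  unfolding is_clique_def
proof (intro conjI ballI impI)
  fix c d assume c: "c \<in> neighbours V E x \<inter> neighbours V E y"
    and d: "d \<in> neighbours V E x \<inter> neighbours V E y" and "c \<noteq> d"
  show "adj E c d"
  proof (rule ccontr)
    assume "\<not> adj E c d"
    moreover have adj: "adj E x c" "adj E x d" "adj E y c" "adj E y d" and "c \<in> V" "d \<in> V"
      using c d by (auto simp: neighbours_def)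
    moreover have "x \<noteq> c" "x \<noteq> d" "y \<noteq> c" "y \<noteq> d"
      using adj_complete_graphD[OF assms(1) adj(1)] adj_complete_graphD[OF assms(1) adj(2)]
        adj_complete_graphD[OF assms(1) adj(3)] adj_complete_graphD[OF assms(1) adj(4)] by simp_all
    ultimately have "induced_cycle V E [x, c, y, d]"
      using assms \<open>c \<noteq> d\<close>
      by (simp add: induced_cycle_Cons_iff induced_path_def less_Suc_eq adj_commute)
    then show False using assms(2) by (auto simp: chordal_def)
  qed
qed (auto simp: neighbours_def)

lemma chordal_common_neighbours_psubset:
  assumes "E \<subseteq> complete_graph V" "chordal V E" "induced_path E ps" "set ps \<subseteq> V" "length ps \<ge> 4"
  shows "neighbours V E (hd ps) \<inter> neighbours V E (last ps)
    \<subset> neighbours V E (hd ps) \<inter> neighbours V E (ps ! 2)"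
proof -
  let ?n = "length ps"
  have ne: "ps \<noteq> []" using assms(5) by auto
  then have ends: "hd ps = ps ! 0" "last ps = ps ! (?n - 1)"
    by (simp_all add: hd_conv_nth last_conv_nth)
  note path = induced_path_adj_iff[OF assms(3)]
  have "c \<in> neighbours V E (ps ! 2)"
    if c: "c \<in> neighbours V E (hd ps) \<inter> neighbours V E (last ps)" for c
  proof -
    have "c \<notin> set ps"
    proof
      assume "c \<in> set ps"
      then obtain i where "i < ?n" "ps ! i = c" by (auto simp: in_set_conv_nth)
      moreover have "adj E (ps ! 0) c" "adj E (ps ! (?n - 1)) c"
        using c ends by (auto simp: neighbours_def)
      ultimately show False
        using path[of 0 i] path[of "?n - 1" i] assms(5) ne adj_complete_graphD[OF assms(1)]
        by (cases "i = 0 \<or> i = ?n - 1") auto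
    qed
    then have "\<forall>a\<in>set ps. adj E c a"
      using c assms ne
      by (intro chordal_adj_induced_path) (auto simp: neighbours_def adj_commute)
    then show ?thesis using c assms(5) by (auto simp: neighbours_def adj_commute)
  qed
  moreover have "ps ! 1 \<in> neighbours V E (hd ps) \<inter> neighbours V E (ps ! 2)"
    using path[of 0 1] path[of 2 1] assms(4,5) ends ne by (auto simp: neighbours_def)
  moreover have "ps ! 1 \<notin> neighbours V E (last ps)"
    using path[of "?n - 1" 1] assms(5) ends ne by (auto simp: neighbours_def)
  ultimately show ?thesis by blast
qed

lemma long_induced_cycle_through_changed_edge:
  assumes "chordal V F" "induced_cycle V E xs" "length xs \<noteq> 3" "x \<noteq> y"
    and "\<And>a b. {a, b} \<noteq> {x, y} \<Longrightarrow> adj E a b \<longleftrightarrow> adj F a b"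
  obtains ps where "induced_cycle V E (x # ps)" "y \<in> set ps" "length (x # ps) = length xs"
proof -
  have "\<not> induced_cycle V F xs" using assms(1,3) by (auto simp: chordal_def)
  then have "x \<in> set xs" "y \<in> set xs"
    using induced_cycle_cong[OF assms(2)] assms(5) by (metis doubleton_eq_iff)+
  then show ?thesis
    using induced_cycle_rotate_to[OF assms(2)] assms(4) that by (metis set_ConsD)
qed

lemma exposed_edge_iff_common_neighbours_clique:
  assumes "finite V" "G \<subseteq> complete_graph V" "{x, y} \<in> G" "x \<noteq> y"
  defines "C \<equiv> neighbours V G x \<inter> neighbours V G y"
  shows "exposed_edge V G {x, y} \<longleftrightarrow> C \<noteq> {} \<and> is_clique V G C"
proof -
  have xy: "x \<in> V" "y \<in> V" "adj G x y"
    using assms(3,4) adj_complete_graphD[OF assms(2)] by (auto simp: adj_def)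
  have C: "c \<in> V \<and> c \<noteq> x \<and> c \<noteq> y \<and> adj G x c \<and> adj G y c" if "c \<in> C" for c
    using that adj_complete_graphD[OF assms(2)] by (auto simp: C_def neighbours_def)
  have clique_sub: "D \<subseteq> {x, y} \<union> C" if "is_clique V G D" "{x, y} \<subseteq> D" for D
    using that by (auto simp: C_def neighbours_def is_clique_def)
  have clique_xy: "is_clique V G {x, y}"
    using xy by (auto simp: is_clique_def adj_commute)
  show ?thesis
  proof
    assume exposed: "exposed_edge V G {x, y}"
    then have "\<exists>!M. maximal_clique V G M \<and> {x, y} \<subseteq> M" by (simp add: exposed_edge_def)
    then obtain M where M: "maximal_clique V G M" "{x, y} \<subseteq> M"
      and M_unique: "\<And>M'. maximal_clique V G M' \<Longrightarrow> {x, y} \<subseteq> M' \<Longrightarrow> M' = M"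
      by (elim ex1E) blast
    have "C \<subseteq> M"
    proof
      fix c assume "c \<in> C"
      then have "is_clique V G {x, y, c}"
        using C xy by (auto simp: is_clique_def adj_commute)
      then obtain M' where "maximal_clique V G M'" "{x, y, c} \<subseteq> M'"
        using ex_maximal_clique_superset[OF assms(1)] by blast
      then show "c \<in> M" using M_unique by auto
    qed
    then have "is_clique V G C"
      using M(1) is_clique_subset by (auto simp: maximal_clique_def)
    moreover have "C \<noteq> {}"
    proof
      assume "C = {}"
      then have "D = {x, y}" if "is_clique V G D" "{x, y} \<subseteq> D" for D
        using clique_sub[OF that] that(2) by blast
      then have "maximal_clique V G {x, y}"
        using clique_xy unfolding maximal_clique_def by blast
      then show False using exposed assms(3) by (simp add: exposed_edge_def facet_edge_def)
    qed
    ultimately show "C \<noteq> {} \<and> is_clique V G C" by blast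
  next
    assume C_clique: "C \<noteq> {} \<and> is_clique V G C"
    let ?M = "{x, y} \<union> C"
    have "is_clique V G ?M"
      using C_clique C xy unfolding is_clique_def by (auto simp: adj_commute)
    then have maximal_iff: "maximal_clique V G M \<and> {x, y} \<subseteq> M \<longleftrightarrow> M = ?M" for M
      using clique_sub unfolding maximal_clique_def by blast
    have "\<not> maximal_clique V G {x, y}"
      using maximal_iff[of "{x, y}"] C_clique C by auto
    then show "exposed_edge V G {x, y}"
      using maximal_iff assms(3) by (auto simp: exposed_edge_def facet_edge_def)
  qed
qed

section \<open>Erasing an exposed edge\<close>

lemma connected_graph_complete_graph: "connected_graph V (complete_graph V)"
  unfolding connected_graph_def
proof (intro ballI)
  fix x y assume "x \<in> V" "y \<in> V"
  then show "(\<lambda>u v. u \<in> V \<and> v \<in> V \<and> adj (complete_graph V) u v)\<^sup>*\<^sup>* x y"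
    by (cases "x = y") (auto simp: adj_def complete_graph_def)
qed

lemma chordal_complete_graph: "chordal V (complete_graph V)"
  unfolding chordal_def
proof (intro allI impI)
  fix xs assume cycle: "induced_cycle V (complete_graph V) xs"
  show "length xs = 3"
  proof (rule ccontr)
    assume "length xs \<noteq> 3"
    with cycle have n: "length xs \<ge> 4" by (simp add: induced_cycle_def)
    have adj: "\<And>i j. i < length xs \<Longrightarrow> j < length xs \<Longrightarrow> i \<noteq> j \<Longrightarrow>
        adj (complete_graph V) (xs ! i) (xs ! j) \<longleftrightarrow>
          j = (i + 1) mod length xs \<or> i = (j + 1) mod length xs"
      using cycle unfolding induced_cycle_def by blast
    have "\<not> adj (complete_graph V) (xs ! 0) (xs ! 2)"
      using adj[of 0 2] n by fastforce
    moreover have "xs ! 0 \<noteq> xs ! 2" "xs ! 0 \<in> V" "xs ! 2 \<in> V"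
      using cycle n nth_mem[of 0 xs] nth_mem[of 2 xs] nth_eq_iff_index_eq[of xs 0 2]
      by (auto simp: induced_cycle_def simp del: length_greater_0_conv)
    ultimately show False by (auto simp: adj_def complete_graph_def)
  qed
qed

lemma connected_graph_Diff_edge:
  assumes "G \<subseteq> complete_graph V" "connected_graph V G" "adj G x z" "adj G z y"
  shows "connected_graph V (G - {{x, y}})"
proof -
  let ?R = "\<lambda>u v. u \<in> V \<and> v \<in> V \<and> adj G u v"
  let ?S = "\<lambda>u v. u \<in> V \<and> v \<in> V \<and> adj (G - {{x, y}}) u v"
  have z: "z \<in> V" "z \<noteq> x" "z \<noteq> y"
    using adj_complete_graphD[OF assms(1) assms(3)] adj_complete_graphD[OF assms(1) assms(4)]
    by auto
  have "?R \<le> ?S\<^sup>*\<^sup>*"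
  proof (intro predicate2I)
    fix a b assume ab: "?R a b"
    show "?S\<^sup>*\<^sup>* a b"
    proof (cases "{a, b} = {x, y}")
      case True
      then have "?S a z" "?S z b"
        using ab z assms(3,4) by (auto simp: adj_Diff_edge doubleton_eq_iff adj_commute)
      then show ?thesis by (rule rtranclp.rtrancl_into_rtrancl[OF r_into_rtranclp])
    qed (use ab in \<open>auto simp: adj_Diff_edge\<close>)
  qed
  then have "?R\<^sup>*\<^sup>* \<le> ?S\<^sup>*\<^sup>*" using rtranclp_mono[of ?R "?S\<^sup>*\<^sup>*"] by simp
  with assms(2) show ?thesis unfolding connected_graph_def by blast
qed

lemma chordal_Diff_exposed_edge:
  assumes "finite V" "G \<subseteq> complete_graph V" "chordal V G" "exposed_edge V G {x, y}" "x \<noteq> y"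
  shows "chordal V (G - {{x, y}})"
  unfolding chordal_def
proof (intro allI impI)
  let ?H = "G - {{x, y}}"
  fix xs assume cycle: "induced_cycle V ?H xs"
  show "length xs = 3"
  proof (rule ccontr)
    assume "length xs \<noteq> 3"
    then obtain ps where cycle_x: "induced_cycle V ?H (x # ps)" and "y \<in> set ps"
      using long_induced_cycle_through_changed_edge[OF assms(3) cycle _ assms(5)]
      by (auto simp: adj_Diff_edge)
    let ?n = "length ps"
    have ps: "induced_path ?H ps" "set ps \<subseteq> V" "x \<notin> set ps" "x \<in> V"
      and x_adj: "\<And>i. i < ?n \<Longrightarrow> adj ?H x (ps ! i) \<longleftrightarrow> i = 0 \<or> i = ?n - 1"
      using cycle_x by (auto simp: induced_cycle_Cons_iff)
    have same_adj: "adj ?H a b \<longleftrightarrow> adj G a b" if "a \<in> set ps" "b \<in> set ps" for a b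
      using that ps(3) by (auto simp: adj_Diff_edge)
    obtain k where k: "k < ?n" "ps ! k = y" using \<open>y \<in> set ps\<close> by (auto simp: in_set_conv_nth)
    then have inner: "0 < k" "Suc k < ?n"
      using x_adj[of k] by (auto simp: adj_Diff_edge)
    have ne: "ps \<noteq> []" using k(1) by auto
    then have ends: "hd ps = ps ! 0" "last ps = ps ! (?n - 1)"
      by (simp_all add: hd_conv_nth last_conv_nth)
    have "\<forall>a\<in>set ps. adj G x a"
    proof (rule chordal_adj_induced_path[OF assms(3)])
      show "induced_path G ps" using induced_path_cong[OF ps(1) same_adj] .
      show "adj G x (hd ps)" "adj G x (last ps)"
        using x_adj[of 0] x_adj[of "?n - 1"] inner ne by (auto simp: ends adj_Diff_edge)
    qed (use ps ne in auto)
    let ?a = "ps ! (k - 1)" and ?b = "ps ! Suc k" and ?C = "neighbours V G x \<inter> neighbours V G y"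
    note around_y = induced_path_inner_vertex[OF ps(1) inner]
    have "{x, y} \<in> G" using assms(4) by (simp add: exposed_edge_def)
    then have "is_clique V G ?C"
      using exposed_edge_iff_common_neighbours_clique[OF assms(1,2) _ assms(5)] assms(4) by simp
    moreover have "?a \<in> ?C" "?b \<in> ?C"
      using \<open>\<forall>a\<in>set ps. adj G x a\<close> around_y k inner ps(2)
      by (auto simp: neighbours_def adj_Diff_edge adj_commute)
    ultimately have "adj G ?a ?b" using around_y(3) by (rule is_clique_adj)
    then show False using around_y same_adj[of ?a ?b] inner by simp
  qed
qed

lemma erasure_preserves_connected_chordal:
  assumes "finite V" "G \<subseteq> complete_graph V" "connected_graph V G" "chordal V G" "erasure V G H"
  shows "H \<subseteq> complete_graph V \<and> connected_graph V H \<and> chordal V H"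
proof -
  obtain e where e: "exposed_edge V G e" "H = G - {e}" using assms(5) by (auto simp: erasure_def)
  then have "e \<in> complete_graph V" using assms(2) by (auto simp: exposed_edge_def)
  then obtain x y where xy: "e = {x, y}" "x \<noteq> y" by (auto simp: complete_graph_def)
  moreover have "{x, y} \<in> G" using e(1) xy(1) by (simp add: exposed_edge_def)
  ultimately have "neighbours V G x \<inter> neighbours V G y \<noteq> {}"
    using exposed_edge_iff_common_neighbours_clique[OF assms(1,2)] e(1) by simp
  then obtain z where "adj G x z" "adj G z y" by (auto simp: neighbours_def adj_commute)
  then have "connected_graph V H"
    using connected_graph_Diff_edge[OF assms(2,3)] e(2) xy(1) by simp
  moreover have "chordal V H"
    using chordal_Diff_exposed_edge[OF assms(1,2,4)] e xy by simp
  ultimately show ?thesis using assms(2) e(2) by blast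
qed

lemma rtranclp_erasure_connected_chordal:
  assumes "finite V" "(erasure V)\<^sup>*\<^sup>* (complete_graph V) H"
  shows "connected_graph V H \<and> chordal V H"
proof -
  from assms(2) have "H \<subseteq> complete_graph V \<and> connected_graph V H \<and> chordal V H"
  proof (induction rule: rtranclp_induct)
    case base
    show ?case using connected_graph_complete_graph chordal_complete_graph by blast
  next
    case (step G H)
    then show ?case using erasure_preserves_connected_chordal[OF assms(1)] by blast
  qed
  then show ?thesis by blast
qed

section \<open>Adding an edge back\<close>

lemma ex_nonadjacent_with_common_neighbour:
  assumes "H \<subseteq> complete_graph V" "connected_graph V H" "H \<noteq> complete_graph V"
  obtains u v where "u \<in> V" "v \<in> V" "u \<noteq> v" "\<not> adj H u v"
    "neighbours V H u \<inter> neighbours V H v \<noteq> {}"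
proof -
  obtain e where "e \<in> complete_graph V" "e \<notin> H" using assms(1,3) by blast
  then obtain u v where uv: "u \<in> V" "v \<in> V" "u \<noteq> v" "\<not> adj H u v"
    by (auto simp: complete_graph_def adj_def)
  let ?R = "\<lambda>a b. a \<in> V \<and> b \<in> V \<and> adj H a b"
  let ?S = "insert u (neighbours V H u)"
  have "?R\<^sup>*\<^sup>* u v" using assms(2) uv by (simp add: connected_graph_def)
  moreover have "u \<in> ?S" by simp
  moreover have "v \<notin> ?S" using uv by (simp add: neighbours_def)
  ultimately obtain w z where "?R w z" "w \<in> ?S" "z \<notin> ?S"
    by (rule rtranclp_leaves_set)
  then have "u \<in> V" "z \<in> V" "u \<noteq> z" "\<not> adj H u z" "w \<in> neighbours V H u \<inter> neighbours V H z"
    using uv by (auto simp: neighbours_def adj_commute)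
  then show ?thesis using that by blast
qed

lemma chordal_insert_edge:
  assumes "finite V" "H \<subseteq> complete_graph V" "chordal V H" "x \<in> V" "y \<in> V" "x \<noteq> y" "\<not> adj H x y"
    and most_common: "\<And>u v. u \<in> V \<Longrightarrow> v \<in> V \<Longrightarrow> u \<noteq> v \<Longrightarrow> \<not> adj H u v \<Longrightarrow>
        card (neighbours V H u \<inter> neighbours V H v) \<le> card (neighbours V H x \<inter> neighbours V H y)"
  shows "chordal V (insert {x, y} H)"
  unfolding chordal_def
proof (intro allI impI)
  let ?G = "insert {x, y} H"
  fix xs assume cycle: "induced_cycle V ?G xs"
  show "length xs = 3"
  proof (rule ccontr)
    assume "length xs \<noteq> 3"
    moreover have "length xs \<ge> 3" using cycle by (simp add: induced_cycle_def)
    ultimately have long: "length xs \<ge> 4" by simp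
    obtain ps where cycle_x: "induced_cycle V ?G (x # ps)" "y \<in> set ps"
      "length (x # ps) = length xs"
      using long_induced_cycle_through_changed_edge[OF assms(3) cycle \<open>length xs \<noteq> 3\<close> assms(6)]
      by (auto simp: adj_insert_edge)
    obtain k where k: "k < length ps" "ps ! k = y" using cycle_x(2) by (auto simp: in_set_conv_nth)
    have "adj ?G x (ps ! k)" using k by (simp add: adj_insert_edge)
    with k(1) cycle_x(1) have "k = 0 \<or> k = length ps - 1" by (simp add: induced_cycle_Cons_iff)
    moreover have "ps \<noteq> []" using k(1) by auto
    ultimately have "y = hd ps \<or> y = last ps" using k by (auto simp: hd_conv_nth last_conv_nth)
    then obtain qs where qs: "induced_cycle V ?G (x # qs)" "last qs = y" "length qs = length ps"
      using cycle_x(1) induced_cycle_Cons_rev[OF cycle_x(1)] by (metis last_rev length_rev)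
    have "{x, y} \<notin> H" using assms(7) by (simp add: adj_def)
    then have path: "induced_path H (x # qs)"
      using induced_cycle_Cons_induced_path_Diff[OF qs(1)] qs(2) by simp
    have "qs \<noteq> []" "set (x # qs) \<subseteq> V" using qs(1) by (auto simp: induced_cycle_Cons_iff)
    then have "neighbours V H x \<inter> neighbours V H y \<subset> neighbours V H x \<inter> neighbours V H (qs ! 1)"
      using chordal_common_neighbours_psubset[OF assms(2,3) path] qs(2,3) cycle_x(3) long by simp
    then have "card (neighbours V H x \<inter> neighbours V H y)
        < card (neighbours V H x \<inter> neighbours V H (qs ! 1))"
      using assms(1) by (intro psubset_card_mono) (auto simp: neighbours_def)
    moreover have "length (x # qs) > 2" using qs(3) cycle_x(3) long by simp
    then have "qs ! 1 \<in> V" "x \<noteq> qs ! 1" "\<not> adj H x (qs ! 1)"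
      using path \<open>set (x # qs) \<subseteq> V\<close> nth_mem[of 2 "x # qs"] induced_path_adj_iff[OF path, of 0 2]
        nth_eq_iff_index_eq[of "x # qs" 0 2] by (auto simp: induced_path_def)
    ultimately show False using most_common[of x "qs ! 1"] assms(4) by simp
  qed
qed

lemma erasure_insert_edge:
  assumes "finite V" "H \<subseteq> complete_graph V" "chordal V H" "x \<in> V" "y \<in> V" "x \<noteq> y" "\<not> adj H x y"
    and "neighbours V H x \<inter> neighbours V H y \<noteq> {}"
  shows "erasure V (insert {x, y} H) H"
proof -
  let ?G = "insert {x, y} H"
  have G: "?G \<subseteq> complete_graph V" "{x, y} \<in> ?G"
    using assms(2,4-6) by (auto simp: complete_graph_def)
  have "neighbours V ?G x \<inter> neighbours V ?G y = neighbours V H x \<inter> neighbours V H y"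
    using assms(6) adj_complete_graphD[OF assms(2)]
    by (auto simp: neighbours_def adj_insert_edge doubleton_eq_iff)
  moreover have "is_clique V ?G (neighbours V H x \<inter> neighbours V H y)"
    using chordal_common_neighbours_clique[OF assms(2-7)] by (rule is_clique_mono) blast
  ultimately have "exposed_edge V ?G {x, y}"
    using exposed_edge_iff_common_neighbours_clique[OF assms(1) G assms(6)] assms(8) by simp
  moreover have "H = ?G - {{x, y}}" using assms(7) by (auto simp: adj_def)
  ultimately show ?thesis unfolding erasure_def by blast
qed

lemma ex_nonadjacent_most_common_neighbours:
  assumes "finite V" "H \<subseteq> complete_graph V" "connected_graph V H" "H \<noteq> complete_graph V"
  obtains x y where "x \<in> V" "y \<in> V" "x \<noteq> y" "\<not> adj H x y"
    "neighbours V H x \<inter> neighbours V H y \<noteq> {}"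
    "\<And>u v. u \<in> V \<Longrightarrow> v \<in> V \<Longrightarrow> u \<noteq> v \<Longrightarrow> \<not> adj H u v \<Longrightarrow>
      card (neighbours V H u \<inter> neighbours V H v) \<le> card (neighbours V H x \<inter> neighbours V H y)"
proof -
  let ?common = "\<lambda>(u, v). neighbours V H u \<inter> neighbours V H v"
  let ?P = "\<lambda>(u, v). u \<in> V \<and> v \<in> V \<and> u \<noteq> v \<and> \<not> adj H u v"
  obtain u v where "u \<in> V" "v \<in> V" "u \<noteq> v" "\<not> adj H u v"
    "neighbours V H u \<inter> neighbours V H v \<noteq> {}"
    by (rule ex_nonadjacent_with_common_neighbour[OF assms(2-4)])
  then have uv: "?P (u, v)" "?common (u, v) \<noteq> {}" by simp_all
  have finite_common: "finite (neighbours V H a \<inter> neighbours V H b)" for a b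
    using assms(1) by (simp add: neighbours_def)
  have "\<forall>p. ?P p \<longrightarrow> card (?common p) < Suc (card V)"
    using assms(1) by (auto simp: neighbours_def less_Suc_eq_le intro: card_mono)
  with uv(1) have "\<exists>p. ?P p \<and> (\<forall>q. ?P q \<longrightarrow> card (?common q) \<le> card (?common p))"
    by (rule Lattices_Big.ex_has_greatest_nat)
  then obtain x y where xy: "?P (x, y)"
    and most_common: "\<And>a b. ?P (a, b) \<Longrightarrow> card (?common (a, b)) \<le> card (?common (x, y))"
    by auto
  have "0 < card (?common (u, v))" using uv(2) finite_common by (simp add: card_gt_0_iff)
  also have "\<dots> \<le> card (?common (x, y))" using most_common uv(1) by simp
  finally have "?common (x, y) \<noteq> {}" by auto
  then show ?thesis using that xy most_common by auto
qed

lemma connected_chordal_imp_rtranclp_erasure: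
  assumes "finite V" "H \<subseteq> complete_graph V" "connected_graph V H" "chordal V H"
  shows "(erasure V)\<^sup>*\<^sup>* (complete_graph V) H"
  using assms(2-)
proof (induction "card (complete_graph V - H)" arbitrary: H rule: less_induct)
  case less
  show ?case
  proof (cases "H = complete_graph V")
    case False
    then obtain x y where xy: "x \<in> V" "y \<in> V" "x \<noteq> y" "\<not> adj H x y"
      and common: "neighbours V H x \<inter> neighbours V H y \<noteq> {}"
      and most_common: "\<And>u v. u \<in> V \<Longrightarrow> v \<in> V \<Longrightarrow> u \<noteq> v \<Longrightarrow> \<not> adj H u v \<Longrightarrow>
        card (neighbours V H u \<inter> neighbours V H v) \<le> card (neighbours V H x \<inter> neighbours V H y)"
      using ex_nonadjacent_most_common_neighbours[OF assms(1) less.prems(1,2)] by metis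
    let ?G = "insert {x, y} H"
    have "{x, y} \<in> complete_graph V" "{x, y} \<notin> H"
      using xy by (auto simp: complete_graph_def adj_def)
    then have "card (complete_graph V - ?G) < card (complete_graph V - H)"
      using finite_complete_graph[OF assms(1)] by (intro psubset_card_mono) auto
    moreover have "?G \<subseteq> complete_graph V" using less.prems(1) \<open>{x, y} \<in> complete_graph V\<close> by simp
    moreover have "connected_graph V ?G" using connected_graph_mono[OF less.prems(2)] by blast
    moreover have "chordal V ?G"
      using chordal_insert_edge[OF assms(1) less.prems(1,3) xy most_common] .
    ultimately have "(erasure V)\<^sup>*\<^sup>* (complete_graph V) ?G" by (rule less.hyps)
    moreover have "erasure V ?G H"
      using erasure_insert_edge[OF assms(1) less.prems(1,3) xy common] .
    ultimately show ?thesis by simp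
  qed simp
qed

theorem theorem2p8:
  fixes V :: "'a set" and H :: "'a set set"
  assumes "finite V" and "simple_graph V H"
  shows "(erasure V)\<^sup>*\<^sup>* (complete_graph V) H \<longleftrightarrow> connected_graph V H \<and> chordal V H"
proof -
  have "H \<subseteq> complete_graph V"
    using assms(2) by (simp add: simple_graph_iff_subset_complete_graph)
  then show ?thesis
    using rtranclp_erasure_connected_chordal[OF assms(1)]
      connected_chordal_imp_rtranclp_erasure[OF assms(1)] by blast
qed

end
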